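(* Let $N$ and $L$ be integers with $1\le L\le N-1$, and let $\hat\alpha>0$, $\hat\delta_1>0$, $\hat\delta_2>0$ with $\hat\delta_1\neq\hat\delta_2$. Let $z,y_1,y_2$ be independent random variables with $z\sim\mathrm{Gamma}(N-L,1)$ and $y_1,y_2\sim\mathrm{Gamma}(L,1)$, and set $$X=\frac{\hat\alpha z}{\hat\delta_1y_1+\hat\delta_2y_2}.$$ Then $$\mathbb{E}\left[\ln(1+X)\right]=\sum_{i=0}^{N-L-1}\sum_{j=1}^2\sum_{k=0}^{L-1}\frac{a^{(j)}_k\hat{\alpha}^{k+1}(k+i)!}{i!}\,I_2\!\left(\frac{\hat{\alpha}}{\hat{\delta}_j},i,k+i+1\right),$$ where, for $0\le i\le L-1$, $$a^{(1)}_i=\frac{1}{\hat\delta_1^{i+1}(L-1)!}\left(\frac{\hat\delta_1}{\hat\delta_1-\hat\delta_2}\right)^L\frac{(2(L-1)-i)!}{i!(L-1-i)!}\left(\frac{\hat\delta_2}{\hat\delta_2-\hat\delta_1}\right)^{L-1-i},$$ $$a^{(2)}_i=\frac{1}{\hat\delta_2^{i+1}(L-1)!}\left(\frac{\hat\delta_2}{\hat\delta_2-\hat\delta_1}\right)^L\frac{(2(L-1)-i)!}{i!(L-1-i)!}\left(\frac{\hat\delta_1}{\hat\delta_1-\hat\delta_2}\right)^{L-1-i}.$$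
   Context: $\mathrm{Gamma}(n,1)$ denotes the distribution with density $t^{n-1}e^{-t}/(n-1)!$ on $t>0$ (its CDF is $1-e^{-t}\sum_{i=0}^{n-1}t^i/i!$). For $a>0$ and nonnegative integers $m,n$ with $n\ge m+1$, define $$I_2(a,m,n)=\int_0^\infty\frac{x^m}{(x+a)^n(x+1)}\,dx.$$ In the paper this models the high-SNR (interference-limited) SINR of a zero-forcing user with quantization and delay. *)

theory Defs
  imports "HOL-Probability.Probability"
begin

definition I2 :: "real \<Rightarrow> nat \<Rightarrow> nat \<Rightarrow> real" where
  "I2 a m n = (LBINT x:{0<..}. x ^ m / ((x + a) ^ n * (x + 1)))"

text \<open>Partial-fraction coefficient: a^(1)_i = acoef L d1 d2 i and a^(2)_i = acoef L d2 d1 i.\<close>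
definition acoef :: "nat \<Rightarrow> real \<Rightarrow> real \<Rightarrow> nat \<Rightarrow> real" where
  "acoef L d1 d2 i =
     1 / (d1 ^ (i + 1) * fact (L - 1)) * (d1 / (d1 - d2)) ^ L
     * (fact (2 * (L - 1) - i) / (fact i * fact (L - 1 - i)))
     * (d2 / (d2 - d1)) ^ (L - 1 - i)"

definition dsel :: "nat \<Rightarrow> real \<Rightarrow> real \<Rightarrow> real" where
  "dsel j d1 d2 = (if j = 1 then d1 else d2)"

end

theory Submission
  imports Defs "HOL-Real_Asymp.Real_Asymp"
begin

(* Proof idea.  The denominator W = d1 y1 + d2 y2 is a sum of two independent Erlang variables
   with different scales.  Its density is the convolution, which by partial fractions is the
   finite mixture  h(w) = sum_j sum_k a^(j)_k w^k exp(-w/d_j)  (mixture_density); the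
   coefficients come out of an explicit antiderivative and two alternating binomial identities.
   For fixed w > 0 the layer-cake formula ln(1+v) = int_0^v dt/(1+t) and Tonelli give
   E ln(1 + alpha z/w) = int_0^oo P(z >= t w/alpha) dt/(1+t), and the Erlang tail is the Poisson
   sum Q_n(s) = sum_{i<=n} s^i e^-s / i!  (erlang_tail).  Integrating against h(w) yields Gamma
   integrals in w, and what is left in t is exactly a combination of the integrals I2. *)


section \<open>Alternating binomial identities\<close>

lemma alternating_sum_choose_choose:
  fixes m s :: nat
  shows "(\<Sum>r\<le>m. (-1)^r * real (m choose r) * real (r choose s)) = (if s = m then (-1)^m else 0)"
proof (cases "s \<le> m")
  case False
  then show ?thesis by (auto intro!: sum.neutral)
next
  case True
  have "(\<Sum>r\<le>m. (-1)^r * real (m choose r) * real (r choose s))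
      = (\<Sum>r\<in>{s..m}. (-1)^r * (real (m choose s) * real ((m - s) choose (r - s))))"
  proof (rule sum.mono_neutral_cong_right)
    fix r assume "r \<in> {s..m}"
    then have "(m choose r) * (r choose s) = (m choose s) * ((m - s) choose (r - s))"
      by (intro choose_mult) auto
    then show "(-1)^r * real (m choose r) * real (r choose s) =
               (-1)^r * (real (m choose s) * real ((m - s) choose (r - s)))"
      by (metis of_nat_mult mult.assoc)
  qed auto
  also have "\<dots> = (\<Sum>t\<le>m - s. (-1)^(t + s) * (real (m choose s) * real ((m - s) choose t)))"
    by (rule sum.reindex_bij_witness[where i="\<lambda>t. t + s" and j="\<lambda>r. r - s"])
       (use True in auto)
  also have "\<dots> = (-1)^s * real (m choose s) * (\<Sum>t\<le>m - s. (-1)^t * real ((m - s) choose t))"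
    unfolding sum_distrib_left by (intro sum.cong refl) (simp add: power_add)
  also have "\<dots> = (if s = m then (-1)^m else 0)"
    using True choose_alternating_sum[of "m - s", where 'a=real] by auto
  finally show ?thesis .
qed

text \<open>Combined with Vandermonde's convolution this evaluates the alternating sum of the
  shifted binomials ((m + r) choose j).\<close>
lemma alternating_sum_choose_shifted:
  fixes m j :: nat
  shows "(\<Sum>r\<le>m. (-1)^r * real (m choose r) * real ((m + r) choose j)) =
         (if j < m then 0 else (-1)^m * real (m choose (j - m)))"
proof -
  have "(\<Sum>r\<le>m. (-1)^r * real (m choose r) * real ((m + r) choose j)) =
      (\<Sum>r\<le>m. (-1)^r * real (m choose r) * (\<Sum>s\<le>j. real (r choose s) * real (m choose (j - s))))"
    by (intro sum.cong refl) (simp add: add.commute[of m] vandermonde[symmetric])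
  also have "\<dots> = (\<Sum>s\<le>j. real (m choose (j - s)) *
                     (\<Sum>r\<le>m. (-1)^r * real (m choose r) * real (r choose s)))"
    unfolding sum_distrib_left sum_distrib_right
    by (subst sum.swap) (intro sum.cong refl, simp add: mult_ac)
  also have "\<dots> = (\<Sum>s\<le>j. if s = m then real (m choose (j - s)) * (-1)^m else 0)"
    by (intro sum.cong refl) (simp add: alternating_sum_choose_choose)
  also have "\<dots> = (if j < m then 0 else (-1)^m * real (m choose (j - m)))"
    by (auto simp: sum.delta)
  finally show ?thesis .
qed

definition exp_poly :: "nat \<Rightarrow> real \<Rightarrow> real" where
  "exp_poly n v = (\<Sum>l\<le>n. v ^ l / fact l)"

lemma exp_poly_0 [simp]: "exp_poly n 0 = 1"
  unfolding exp_poly_def by (induction n) auto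

lemma exp_poly_Suc: "exp_poly (Suc n) v = exp_poly n v + v ^ Suc n / fact (Suc n)"
  unfolding exp_poly_def by simp

lemma fact_exp_poly_expand:
  fixes m r :: nat and v :: real
  assumes "r \<le> m"
  shows "fact (m + r) * v ^ (m - r) * exp_poly (m + r) v =
         (\<Sum>i\<le>2*m. fact i * real ((m + r) choose i) * v ^ (2*m - i))"
proof -
  let ?n = "m + r"
  have "fact ?n * v ^ (m - r) * exp_poly ?n v = (\<Sum>l\<le>?n. fact ?n / fact l * v ^ (m - r + l))"
    unfolding exp_poly_def sum_distrib_left by (intro sum.cong refl) (simp add: power_add)
  also have "\<dots> = (\<Sum>i\<le>?n. fact ?n / fact (?n - i) * v ^ (2*m - i))"
    by (rule sum.reindex_bij_witness[where i="\<lambda>i. ?n - i" and j="\<lambda>i. ?n - i"])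
       (use assms in \<open>auto simp: mult_2\<close>)
  also have "\<dots> = (\<Sum>i\<le>?n. fact i * real (?n choose i) * v ^ (2*m - i))"
    by (intro sum.cong refl) (simp add: binomial_fact)
  also have "\<dots> = (\<Sum>i\<le>2*m. fact i * real (?n choose i) * v ^ (2*m - i))"
    using assms by (intro sum.mono_neutral_left) auto
  finally show ?thesis .
qed

text \<open>The key cancellation: an alternating combination of truncated exponential series
  collapses to a polynomial of degree m.  It produces the coefficients a^(2)_k.\<close>
lemma alternating_sum_exp_poly:
  fixes m :: nat and v :: real
  shows "(\<Sum>r\<le>m. real (m choose r) * (-1)^r * fact (m + r) * v ^ (m - r) * exp_poly (m + r) v) =
         (-1)^m * (\<Sum>k\<le>m. real (m choose k) * fact (2*m - k) * v ^ k)"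
proof -
  have "(\<Sum>r\<le>m. real (m choose r) * (-1)^r * fact (m + r) * v ^ (m - r) * exp_poly (m + r) v) =
      (\<Sum>r\<le>m. real (m choose r) * (-1)^r *
         (\<Sum>i\<le>2*m. fact i * real ((m + r) choose i) * v ^ (2*m - i)))"
    by (intro sum.cong refl, subst fact_exp_poly_expand[symmetric]) (simp_all add: mult.assoc)
  also have "\<dots> = (\<Sum>i\<le>2*m. fact i * v ^ (2*m - i) *
                     (\<Sum>r\<le>m. (-1)^r * real (m choose r) * real ((m + r) choose i)))"
    unfolding sum_distrib_left by (subst sum.swap) (intro sum.cong refl, simp add: mult_ac)
  also have "\<dots> = (\<Sum>i\<in>{m..2*m}. fact i * v ^ (2*m - i) * ((-1)^m * real (m choose (i - m))))"
    by (rule sum.mono_neutral_cong_right) (auto simp: alternating_sum_choose_shifted)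
  also have "\<dots> = (\<Sum>k\<le>m. fact (2*m - k) * v ^ k * ((-1)^m * real (m choose k)))"
  proof (rule sum.reindex_bij_witness[where i="\<lambda>k. 2*m - k" and j="\<lambda>i. 2*m - i"])
    fix i assume i: "i \<in> {m..2*m}"
    then have "2*m - i = m - (i - m)" and "i - m \<le> m" by auto
    then have "m choose (2*m - i) = m choose (i - m)"
      by (metis binomial_symmetric)
    then show "fact (2*m - (2*m - i)) * v ^ (2*m - i) * ((-1)^m * real (m choose (2*m - i))) =
          fact i * v ^ (2*m - i) * ((-1)^m * real (m choose (i - m)))"
      using i by simp
  qed auto
  also have "\<dots> = (-1)^m * (\<Sum>k\<le>m. real (m choose k) * fact (2*m - k) * v ^ k)"
    unfolding sum_distrib_left by (intro sum.cong refl) (simp add: mult_ac)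
  finally show ?thesis .
qed


section \<open>An antiderivative of y^n exp(-c y)\<close>

text \<open>Explicit antiderivative of y^n exp(-c y); for c > 0 it tends to 0 as y \<rightarrow> \<infinity>.\<close>
definition gamma_antideriv :: "real \<Rightarrow> nat \<Rightarrow> real \<Rightarrow> real" where
  "gamma_antideriv c n y = - exp (-c*y) * fact n / c^(n+1) * exp_poly n (c*y)"

lemma gamma_antideriv_Suc:
  assumes "c \<noteq> 0"
  shows "gamma_antideriv c (Suc n) y =
           - exp (-c*y) * y^(Suc n) / c + real (Suc n) / c * gamma_antideriv c n y"
  unfolding gamma_antideriv_def exp_poly_Suc using assms
  by (simp add: field_simps power_mult_distrib del: fact_Suc of_nat_Suc)
     (simp add: field_simps)

lemma gamma_antideriv_deriv:
  assumes c: "c \<noteq> 0"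
  shows "(gamma_antideriv c n has_real_derivative y^n * exp (-c*y)) (at y)"
proof (induction n arbitrary: y)
  case 0
  have "gamma_antideriv c 0 = (\<lambda>y. - exp (-c*y) / c)"
    using c by (simp add: gamma_antideriv_def exp_poly_def fun_eq_iff)
  then show ?case
    using c by (auto intro!: derivative_eq_intros simp: field_simps)
next
  case (Suc n)
  have "gamma_antideriv c (Suc n) =
          (\<lambda>y. - exp (-c*y) * y^(Suc n) / c + real (Suc n) / c * gamma_antideriv c n y)"
    using c by (simp add: gamma_antideriv_Suc fun_eq_iff)
  then show ?case
    using c by (auto intro!: derivative_eq_intros Suc.IH simp: field_simps) (cases n, auto)
qed

lemma gamma_antideriv_0: "gamma_antideriv c n 0 = - fact n / c^(n+1)"
  unfolding gamma_antideriv_def by simp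


section \<open>Convolution of two Erlang densities\<close>

text \<open>For rates a \<noteq> b the convolution of erlang_density m a and erlang_density m b at x is
  conv_const m a b times the integral over [0,x] of (x-y)^m exp(-a(x-y)) y^m exp(-b y); expanding
  (x-y)^m binomially gives the explicit antiderivative conv_antideriv in y.\<close>
definition conv_const :: "nat \<Rightarrow> real \<Rightarrow> real \<Rightarrow> real" where
  "conv_const m a b = a^(Suc m) * b^(Suc m) / (fact m)^2"

definition conv_antideriv :: "nat \<Rightarrow> real \<Rightarrow> real \<Rightarrow> real \<Rightarrow> real \<Rightarrow> real" where
  "conv_antideriv m a b x y = conv_const m a b * exp (-a*x) *
     (\<Sum>r\<le>m. real (m choose r) * x^(m-r) * (-1)^r * gamma_antideriv (b - a) (m+r) y)"

lemma binomial_diff_times_power: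
  fixes x y :: real
  shows "(x - y)^m * y^m = (\<Sum>r\<le>m. real (m choose r) * x^(m-r) * (-1)^r * y^(m+r))"
proof -
  have "(x - y)^m * y^m = (\<Sum>r\<le>m. real (m choose r) * (-y)^r * x^(m-r)) * y^m"
    using binomial_ring[of "-y" x m] by simp
  also have "\<dots> = (\<Sum>r\<le>m. real (m choose r) * x^(m-r) * (-1)^r * y^(m+r))"
    unfolding sum_distrib_right
    by (intro sum.cong refl) (simp add: power_minus[of y] power_add mult_ac)
  finally show ?thesis .
qed

lemma conv_antideriv_deriv:
  assumes ab: "a \<noteq> b"
  shows "(conv_antideriv m a b x has_real_derivative
           conv_const m a b * ((x-y)^m * exp (-a*(x-y)) * (y^m * exp (-b*y)))) (at y)"
proof -
  have c: "b - a \<noteq> 0" using ab by simp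
  have D: "(conv_antideriv m a b x has_real_derivative conv_const m a b * exp (-a*x) *
     (\<Sum>r\<le>m. real (m choose r) * x^(m-r) * (-1)^r * (y^(m+r) * exp (-(b-a)*y)))) (at y)"
    unfolding conv_antideriv_def
    by (intro DERIV_cmult DERIV_sum DERIV_cmult gamma_antideriv_deriv c)
  have "(\<Sum>r\<le>m. real (m choose r) * x^(m-r) * (-1)^r * (y^(m+r) * exp (-(b-a)*y))) =
        (x - y)^m * y^m * exp (-(b-a)*y)"
    unfolding binomial_diff_times_power sum_distrib_right by (intro sum.cong refl) (simp add: mult_ac)
  moreover have "exp (-a*x) * exp (-(b-a)*y) = exp (-a*(x-y)) * exp (-b*y)"
    by (simp add: exp_add[symmetric] algebra_simps)
  ultimately show ?thesis
    using D by (simp add: mult_ac)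
qed

lemma acoef_closed:
  fixes p q :: real
  assumes "p \<noteq> 0" "q \<noteq> 0" "p \<noteq> q"
  shows "acoef (Suc (k + n)) p q k =
    (-1)^n * fact (k + 2*n) * (p*q)^n / (fact (k+n) * fact k * fact n * (p - q)^(k + 2*n + 1))"
proof -
  define D where "D = p - q"
  have D: "D \<noteq> 0" "q - p = -D" using assms by (auto simp: D_def)
  have neg: "(- (q / D))^n = (-1)^n * q^n / D^n"
    by (simp add: power_minus[of "q / D"] power_divide)
  have e: "2 * (Suc (k + n) - 1) - k = k + 2*n" "Suc (k+n) - 1 - k = n" "Suc (k+n) - 1 = k + n"
    by auto
  have "acoef (Suc (k + n)) p q k = 1 / (p^(k+1) * fact (k+n)) * (p^(k+1) * p^n / D^(k+n+1))
      * (fact (k + 2*n) / (fact k * fact n)) * ((-1)^n * q^n / D^n)"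
    unfolding acoef_def e D_def[symmetric] D(2)
    by (simp add: neg power_divide power_add mult_ac)
  also have "\<dots> = (-1)^n * fact (k + 2*n) * (p*q)^n / (fact (k+n) * fact k * fact n * D^(k + 2*n + 1))"
    using assms(1,2) D(1)
    by (simp add: field_simps power_add power_mult_distrib power_mult power2_eq_square)
  finally show ?thesis unfolding D_def .
qed


text \<open>The common shape of both families of coefficients produced by conv_antideriv
  (m = k + n, c = 1/q - 1/p, and a sign \<sigma>).\<close>
lemma conv_coeff_shape:
  fixes p q \<sigma> :: real
  assumes p: "p > 0" and q: "q > 0" and pq: "p \<noteq> q"
  shows "conv_const (k+n) (1/p) (1/q) * real ((k+n) choose k) * \<sigma> * fact (k+2*n)
           / (1/q - 1/p)^(k+2*n+1) =
         \<sigma> * fact (k+2*n) * (p*q)^n / (fact (k+n) * fact k * fact n * (p-q)^(k+2*n+1))"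
proof -
  define A where "A = (p*q)^Suc (k+n)"
  define B where "B = (p*q)^n"
  define E where "E = (p-q)^(k+2*n+1)"
  have nz: "A \<noteq> 0" "B \<noteq> 0" "E \<noteq> 0" using p q pq by (auto simp: A_def B_def E_def)
  have K: "conv_const (k+n) (1/p) (1/q) = 1 / (A * (fact (k+n))^2)"
    unfolding conv_const_def A_def by (simp add: power_one_over power_mult_distrib)
  have "(1/q - 1/p)^(k+2*n+1) = ((p-q) / (p*q))^(k+2*n+1)"
    using p q by (simp add: field_simps)
  also have "\<dots> = E / (A * B)"
  proof -
    have "k + 2*n + 1 = Suc (k+n) + n" by simp
    then show ?thesis unfolding E_def A_def B_def power_divide by (metis power_add)
  qed
  finally have c: "(1/q - 1/p)^(k+2*n+1) = E / (A * B)" .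
  have b: "real ((k+n) choose k) = fact (k+n) / (fact k * fact n)"
    by (simp add: binomial_fact)
  show ?thesis
    unfolding K c b B_def[symmetric] E_def[symmetric]
    using nz by (simp add: field_simps power2_eq_square)
qed

text \<open>Coefficients a^(1)_k: the terms of the convolution that decay like exp(-x/p).\<close>
lemma conv_coeff_first:
  fixes p q :: real
  assumes p: "p > 0" and q: "q > 0" and pq: "p \<noteq> q" and km: "k \<le> m"
  shows "conv_const m (1/p) (1/q) * real (m choose k) * (-1)^(m-k) * fact (2*m-k)
           / (1/q - 1/p)^(2*m-k+1) = acoef (Suc m) p q k"
proof -
  obtain n where m: "m = k + n" using km by (metis le_add_diff_inverse)
  have e: "k + n - k = n" "2*(k+n) - k = k + 2*n" by auto
  show ?thesis
    unfolding m e conv_coeff_shape[OF p q pq]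
    using acoef_closed[of p q k n] p q pq by simp
qed

text \<open>Coefficients a^(2)_k: the terms of the convolution that decay like exp(-x/q).\<close>
lemma conv_coeff_second:
  fixes p q :: real
  assumes p: "p > 0" and q: "q > 0" and pq: "p \<noteq> q" and km: "k \<le> m"
  shows "conv_const m (1/p) (1/q) * ((-1)^m / (1/q - 1/p)^(2*m+1) *
           (real (m choose k) * fact (2*m-k) * (1/q - 1/p)^k)) = - acoef (Suc m) q p k"
proof -
  obtain n where m: "m = k + n" using km by (metis le_add_diff_inverse)
  define c where "c = 1/q - 1/p"
  define e where "e = k + 2*n + 1"
  have c0: "c \<noteq> 0" using p q pq by (auto simp: c_def field_simps)
  have c_swap: "1/p - 1/q = - c" unfolding c_def by simp
  have sym: "conv_const (k+n) (1/p) (1/q) = conv_const (k+n) (1/q) (1/p)"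
    unfolding conv_const_def by (simp add: mult.commute)
  have sign: "(-1::real)^(k+n) / c^e = - ((-1)^n) / (-c)^e"
    unfolding e_def power_minus[of c] by (cases "even k") (simp_all add: power_add power_mult)
  have "2*(k+n)+1 = e + k" unfolding e_def by simp
  then have pw: "c^(2*(k+n)+1) = c^e * c^k" by (metis power_add)
  have "conv_const m (1/p) (1/q) * ((-1)^m / c^(2*m+1) * (real (m choose k) * fact (2*m-k) * c^k))
      = conv_const (k+n) (1/p) (1/q) * real ((k+n) choose k) * fact (k+2*n) * ((-1)^(k+n) / c^e)"
    unfolding m pw using c0 by (simp add: mult_2 field_simps)
  also have "\<dots> = conv_const (k+n) (1/q) (1/p) * real ((k+n) choose k) * (- ((-1)^n)) * fact (k+2*n)
                    / (1/p - 1/q)^(k+2*n+1)"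
    unfolding sign unfolding sym c_swap e_def by simp
  also have "\<dots> = - ((-1)^n * fact (k+2*n) * (q*p)^n / (fact (k+n) * fact k * fact n * (q-p)^(k+2*n+1)))"
    unfolding conv_coeff_shape[OF q p pq[symmetric]] by simp
  also have "\<dots> = - acoef (Suc m) q p k"
    unfolding m using acoef_closed[of q p k n] p q pq by simp
  finally show ?thesis unfolding c_def .
qed

text \<open>The two pieces of conv_antideriv x x - conv_antideriv x 0: the values at y = 0 give a
  polynomial in x, the values at y = x an exp(-(b-a)x) times a polynomial in x.\<close>
lemma conv_polynomial_part:
  fixes c x :: real
  shows "(\<Sum>r\<le>m. real (m choose r) * x^(m-r) * (-1)^r * (fact (m+r) / c^(m+r+1))) =
         (\<Sum>k\<le>m. real (m choose k) * (-1)^(m-k) * fact (2*m-k) / c^(2*m-k+1) * x^k)"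
proof (rule sum.reindex_bij_witness[where i="\<lambda>k. m - k" and j="\<lambda>r. m - r"])
  fix r assume r: "r \<in> {..m}"
  then have "m choose (m - r) = m choose r" "m - (m - r) = r" "2*m - (m - r) = m + r"
    using binomial_symmetric[of r m] by auto
  then show "real (m choose (m - r)) * (-1)^(m - (m - r)) * fact (2*m - (m - r))
               / c^(2*m - (m - r) + 1) * x^(m - r) =
             real (m choose r) * x^(m-r) * (-1)^r * (fact (m+r) / c^(m+r+1))"
    by simp
qed auto

lemma conv_exponential_part:
  fixes c x :: real
  assumes c: "c \<noteq> 0"
  shows "(\<Sum>r\<le>m. real (m choose r) * x^(m-r) * (-1)^r *
            (fact (m+r) / c^(m+r+1) * exp_poly (m+r) (c*x))) =
         (-1)^m / c^(2*m+1) * (\<Sum>k\<le>m. real (m choose k) * fact (2*m-k) * (c*x)^k)"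
proof -
  have "(\<Sum>r\<le>m. real (m choose r) * x^(m-r) * (-1)^r *
            (fact (m+r) / c^(m+r+1) * exp_poly (m+r) (c*x))) =
        1 / c^(2*m+1) * (\<Sum>r\<le>m. real (m choose r) * (-1)^r * fact (m + r) * (c*x) ^ (m - r)
                                    * exp_poly (m + r) (c*x))"
    unfolding sum_distrib_left
  proof (intro sum.cong refl)
    fix r assume "r \<in> {..m}"
    then have "2*m+1 = (m-r) + (m+r+1)" by simp
    then have "c^(2*m+1) = c^(m-r) * c^(m+r+1)"
      by (metis power_add)
    then show "real (m choose r) * x^(m-r) * (-1)^r * (fact (m+r) / c^(m+r+1) * exp_poly (m+r) (c*x)) =
      1 / c^(2*m+1) * (real (m choose r) * (-1)^r * fact (m + r) * (c*x) ^ (m - r)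
                       * exp_poly (m + r) (c*x))"
      using c by (simp add: power_mult_distrib field_simps)
  qed
  then show ?thesis by (simp add: alternating_sum_exp_poly)
qed

lemma conv_antideriv_increment:
  fixes a b x :: real
  defines "c \<equiv> b - a"
  assumes c: "c \<noteq> 0"
  shows "conv_antideriv m a b x x - conv_antideriv m a b x 0 = conv_const m a b * exp (-a*x) *
     ((\<Sum>k\<le>m. real (m choose k) * (-1)^(m-k) * fact (2*m-k) / c^(2*m-k+1) * x^k)
      - exp (-c*x) * ((-1)^m / c^(2*m+1) * (\<Sum>k\<le>m. real (m choose k) * fact (2*m-k) * (c*x)^k)))"
proof -
  have P: "gamma_antideriv c n x - gamma_antideriv c n 0 =
             fact n / c^(n+1) - exp (-c*x) * (fact n / c^(n+1) * exp_poly n (c*x))" for n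
    unfolding gamma_antideriv_0 unfolding gamma_antideriv_def by simp
  have "conv_antideriv m a b x x - conv_antideriv m a b x 0 = conv_const m a b * exp (-a*x) *
      (\<Sum>r\<le>m. real (m choose r) * x^(m-r) * (-1)^r *
                 (gamma_antideriv c (m+r) x - gamma_antideriv c (m+r) 0))"
    unfolding conv_antideriv_def c_def right_diff_distrib[symmetric] sum_subtractf[symmetric] ..
  also have "\<dots> = conv_const m a b * exp (-a*x) *
      ((\<Sum>r\<le>m. real (m choose r) * x^(m-r) * (-1)^r * (fact (m+r) / c^(m+r+1)))
       - exp (-c*x) * (\<Sum>r\<le>m. real (m choose r) * x^(m-r) * (-1)^r *
                                  (fact (m+r) / c^(m+r+1) * exp_poly (m+r) (c*x))))"
    unfolding P sum_distrib_left sum_subtractf[symmetric]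
    by (intro arg_cong[where f="\<lambda>t. conv_const m a b * exp (-a*x) * t"] sum.cong refl)
       (simp add: algebra_simps)
  finally show ?thesis
    unfolding conv_polynomial_part conv_exponential_part[OF c] .
qed

lemma conv_antideriv_partial_fractions:
  fixes d1 d2 x :: real
  assumes d1: "d1 > 0" and d2: "d2 > 0" and d12: "d1 \<noteq> d2"
  shows "conv_antideriv m (1/d1) (1/d2) x x - conv_antideriv m (1/d1) (1/d2) x 0 =
    (\<Sum>k\<le>m. acoef (Suc m) d1 d2 k * x^k * exp (-x/d1)) +
    (\<Sum>k\<le>m. acoef (Suc m) d2 d1 k * x^k * exp (-x/d2))"
proof -
  define c where "c = 1/d2 - 1/d1"
  have c0: "c \<noteq> 0" using d1 d2 d12 unfolding c_def by (auto simp: field_simps)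
  define K where "K = conv_const m (1/d1) (1/d2)"
  have ec: "exp (- (1/d1) * x) * exp (-c*x) = exp (-x/d2)"
    unfolding c_def by (simp add: exp_add[symmetric] algebra_simps)
  have first: "K * exp (-(1/d1)*x) *
      (\<Sum>k\<le>m. real (m choose k) * (-1)^(m-k) * fact (2*m-k) / c^(2*m-k+1) * x^k) =
      (\<Sum>k\<le>m. acoef (Suc m) d1 d2 k * x^k * exp (-x/d1))"
    unfolding sum_distrib_left
    by (intro sum.cong refl)
       (simp add: conv_coeff_first[OF d1 d2 d12, symmetric] K_def c_def mult_ac)
  have second: "K * exp (-(1/d1)*x) * (exp (-c*x) *
      ((-1)^m / c^(2*m+1) * (\<Sum>k\<le>m. real (m choose k) * fact (2*m-k) * (c*x)^k))) =
      - (\<Sum>k\<le>m. acoef (Suc m) d2 d1 k * x^k * exp (-x/d2))"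
    unfolding sum_distrib_left sum_negf[symmetric]
  proof (intro sum.cong refl)
    fix k assume k: "k \<in> {..m}"
    have coef: "K * ((-1)^m / c^(2*m+1) * (real (m choose k) * fact (2*m-k) * c^k)) =
                     - acoef (Suc m) d2 d1 k"
      unfolding K_def c_def by (rule conv_coeff_second[OF d1 d2 d12]) (use k in simp)
    have "K * exp (-(1/d1)*x) * (exp (-c*x) * ((-1)^m / c^(2*m+1) *
        (real (m choose k) * fact (2*m-k) * (c*x)^k))) =
        (K * ((-1)^m / c^(2*m+1) * (real (m choose k) * fact (2*m-k) * c^k))) * x^k
        * (exp (-(1/d1)*x) * exp (-c*x))"
      by (simp add: power_mult_distrib mult_ac)
    then show "K * exp (-(1/d1)*x) * (exp (-c*x) * ((-1)^m / c^(2*m+1) *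
        (real (m choose k) * fact (2*m-k) * (c*x)^k))) = - (acoef (Suc m) d2 d1 k * x^k * exp (-x/d2))"
      unfolding coef ec by simp
  qed
  show ?thesis
    unfolding conv_antideriv_increment[OF c0[unfolded c_def]] c_def[symmetric] K_def[symmetric]
    using first second by (simp add: right_diff_distrib mult.assoc)
qed


text \<open>The density of W = d1 y1 + d2 y2: a mixture of Erlang densities with the coefficients
  a^(j)_k of the theorem (the weights can be negative; the sum is a density for L \<ge> 1).\<close>
definition mixture_density :: "nat \<Rightarrow> real \<Rightarrow> real \<Rightarrow> real \<Rightarrow> real" where
  "mixture_density L d1 d2 x = (\<Sum>j\<in>{1::nat, 2}. \<Sum>k = 0..L - 1.
      acoef L (dsel j d1 d2) (dsel j d2 d1) k * (fact k * dsel j d1 d2 ^ (k + 1))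
      * erlang_density k (1 / dsel j d1 d2) x)"

lemma mixture_density_measurable [measurable]: "mixture_density L d1 d2 \<in> borel_measurable borel"
  unfolding mixture_density_def by measurable

lemma mixture_density_neg: "x < 0 \<Longrightarrow> mixture_density L d1 d2 x = 0"
  unfolding mixture_density_def erlang_density_def by simp

lemma erlang_density_scale_form:
  assumes "d > 0" "x \<ge> 0"
  shows "fact k * d ^ (k + 1) * erlang_density k (1 / d) x = x^k * exp (-x/d)"
  using assms unfolding erlang_density_def by (simp add: field_simps power_divide)

lemma mixture_density_nonneg_arg:
  assumes d1: "d1 > 0" and d2: "d2 > 0" and x: "x \<ge> 0"
  shows "mixture_density (Suc m) d1 d2 x =
           (\<Sum>k\<le>m. acoef (Suc m) d1 d2 k * x^k * exp (-x/d1)) +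
           (\<Sum>k\<le>m. acoef (Suc m) d2 d1 k * x^k * exp (-x/d2))"
proof -
  have "mixture_density (Suc m) d1 d2 x =
      (\<Sum>k\<le>m. acoef (Suc m) d1 d2 k * (fact k * d1 ^ (k + 1) * erlang_density k (1 / d1) x)) +
      (\<Sum>k\<le>m. acoef (Suc m) d2 d1 k * (fact k * d2 ^ (k + 1) * erlang_density k (1 / d2) x))"
    unfolding mixture_density_def by (simp add: dsel_def atLeast0AtMost mult.assoc)
  then show ?thesis
    by (simp only: erlang_density_scale_form[OF d1 x, unfolded mult.assoc]
                   erlang_density_scale_form[OF d2 x, unfolded mult.assoc] mult.assoc)
qed

text \<open>Proof: fundamental theorem of calculus
  with the antiderivative conv_antideriv.\<close>
lemma erlang_convolution:
  fixes d1 d2 x :: real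
  assumes d1: "d1 > 0" and d2: "d2 > 0" and d12: "d1 \<noteq> d2" and x: "x > 0"
  shows "(\<integral>\<^sup>+y. ennreal (erlang_density m (1/d1) (x - y)) * ennreal (erlang_density m (1/d2) y)
             \<partial>lborel) = ennreal (mixture_density (Suc m) d1 d2 x)"
    and "mixture_density (Suc m) d1 d2 x \<ge> 0"
proof -
  define a where "a = 1/d1"
  define b where "b = 1/d2"
  have a: "a > 0" and b: "b > 0" and ab: "a \<noteq> b"
    using d1 d2 d12 by (auto simp: a_def b_def)
  define f where "f y = conv_const m a b * ((x-y)^m * exp (-a*(x-y)) * (y^m * exp (-b*y)))" for y
  have f_nonneg: "0 \<le> f y" if "y \<in> {0..x}" for y
    using that a b unfolding f_def conv_const_def by (auto intro!: mult_nonneg_nonneg)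
  have f_meas [measurable]: "f \<in> borel_measurable borel" unfolding f_def by measurable
  have f_deriv: "(conv_antideriv m a b x has_real_derivative f y) (at y)" for y
    unfolding f_def by (rule conv_antideriv_deriv[OF ab])
  have increment: "conv_antideriv m a b x x - conv_antideriv m a b x 0 = mixture_density (Suc m) d1 d2 x"
    unfolding a_def b_def conv_antideriv_partial_fractions[OF d1 d2 d12]
      mixture_density_nonneg_arg[OF d1 d2 less_imp_le[OF x]] ..
  have "ennreal (erlang_density m a (x - y)) * ennreal (erlang_density m b y) =
          ennreal (f y) * indicator {0..x} y" for y
  proof (cases "y \<in> {0..x}")
    case True
    then have "erlang_density m a (x - y) * erlang_density m b y = f y"
      unfolding erlang_density_def f_def conv_const_def by (auto simp: field_simps power2_eq_square)
    then show ?thesis using True a b by (simp add: ennreal_mult[symmetric])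
  qed (auto simp: erlang_density_def)
  then have "(\<integral>\<^sup>+y. ennreal (erlang_density m a (x - y)) * ennreal (erlang_density m b y) \<partial>lborel)
      = (\<integral>\<^sup>+y. ennreal (f y) * indicator {0..x} y \<partial>lborel)" by simp
  also have "\<dots> = ennreal (mixture_density (Suc m) d1 d2 x)"
    unfolding increment[symmetric]
    by (rule nn_integral_FTC_Icc[OF f_meas f_deriv f_nonneg]) (use x in auto)
  finally show "(\<integral>\<^sup>+y. ennreal (erlang_density m (1/d1) (x - y)) * ennreal (erlang_density m (1/d2) y)
             \<partial>lborel) = ennreal (mixture_density (Suc m) d1 d2 x)"
    unfolding a_def b_def .
  have "(\<integral>y. f y * indicator {0..x} y \<partial>lborel) = mixture_density (Suc m) d1 d2 x"
    unfolding increment[symmetric]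
    by (rule integral_FTC_Icc_nonneg[OF f_meas f_deriv f_nonneg]) (use x in auto)
  moreover have "0 \<le> (\<integral>y. f y * indicator {0..x} y \<partial>lborel)"
    by (rule Bochner_Integration.integral_nonneg) (auto simp: f_nonneg split: split_indicator)
  ultimately show "mixture_density (Suc m) d1 d2 x \<ge> 0" by simp
qed


section \<open>Erlang tails and the layer-cake formula for the logarithm\<close>

text \<open>The tail P(z \<ge> s) of the Erlang(n+1, 1) distribution, a Poisson sum.\<close>
definition erlang_tail :: "nat \<Rightarrow> real \<Rightarrow> real" where
  "erlang_tail n s = (\<Sum>i\<le>n. s^i * exp (-s) / fact i)"

lemma erlang_tail_nonneg: "s \<ge> 0 \<Longrightarrow> erlang_tail n s \<ge> 0"
  unfolding erlang_tail_def by (intro sum_nonneg) auto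

lemma erlang_tail_measurable [measurable]: "erlang_tail n \<in> borel_measurable borel"
  unfolding erlang_tail_def by measurable

lemma erlang_density_total_mass: "l > 0 \<Longrightarrow> (\<integral>\<^sup>+x. ennreal (erlang_density k l x) \<partial>lborel) = 1"
  using nn_integral_erlang_ith_moment[of l k 0] by simp

lemma has_bochner_integral_erlang_density:
  "l > 0 \<Longrightarrow> has_bochner_integral lborel (erlang_density k l) 1"
  by (rule has_bochner_integral_nn_integral) (auto simp: erlang_density_total_mass)

lemma nn_integral_erlang_tail:
  assumes s: "s \<ge> 0"
  shows "(\<integral>\<^sup>+x. ennreal (erlang_density n 1 x) * indicator {s..} x \<partial>lborel) = ennreal (erlang_tail n s)"
proof -
  let ?f = "\<lambda>x. ennreal (erlang_density n 1 x)"
  have below: "(\<integral>\<^sup>+x. ?f x * indicator {..<s} x \<partial>lborel) = ennreal (1 - erlang_tail n s)"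
  proof -
    have "(\<integral>\<^sup>+x. ?f x * indicator {..<s} x \<partial>lborel) = (\<integral>\<^sup>+x. ?f x * indicator {..s} x \<partial>lborel)"
      by (intro nn_integral_cong_AE) (use AE_lborel_singleton[of s] in \<open>auto split: split_indicator\<close>)
    then show ?thesis
      using nn_integral_erlang_density[of 1 n s] s unfolding erlang_CDF_def erlang_tail_def by simp
  qed
  have tail_le_1: "erlang_tail n s \<le> 1"
    using erlang_CDF_nonneg[of 1 n s] s unfolding erlang_CDF_def erlang_tail_def by simp
  have "(\<integral>\<^sup>+x. ?f x \<partial>lborel) =
          (\<integral>\<^sup>+x. ?f x * indicator {..<s} x \<partial>lborel) + (\<integral>\<^sup>+x. ?f x * indicator {s..} x \<partial>lborel)"
    by (subst nn_integral_add[symmetric]) (auto intro!: nn_integral_cong split: split_indicator)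
  then have "1 = (\<integral>\<^sup>+x. ?f x * indicator {..<s} x \<partial>lborel) + (\<integral>\<^sup>+x. ?f x * indicator {s..} x \<partial>lborel)"
    by (simp add: erlang_density_total_mass)
  then have "(\<integral>\<^sup>+x. ?f x * indicator {s..} x \<partial>lborel) = 1 - ennreal (1 - erlang_tail n s)"
    unfolding below by (metis ennreal_add_diff_cancel_left ennreal_neq_top add.commute)
  also have "\<dots> = ennreal (erlang_tail n s)"
    using tail_le_1 erlang_tail_nonneg[OF s]
    by (simp add: ennreal_minus ennreal_1[symmetric] del: ennreal_1)
  finally show ?thesis .
qed

lemma ln_as_nn_integral:
  assumes v: "v \<ge> 0"
  shows "ennreal (ln (1 + v)) = (\<integral>\<^sup>+t. ennreal (1 / (1 + t)) * indicator {0..v} t \<partial>lborel)"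
proof -
  have "(\<integral>\<^sup>+t. ennreal (1 / (1 + t)) * indicator {0..v} t \<partial>lborel) = ennreal (ln (1 + v) - ln (1 + 0))"
    by (rule nn_integral_FTC_Icc) (auto intro!: derivative_eq_intros simp: v)
  then show ?thesis by simp
qed


text \<open>The integrand of the Tonelli argument: z = x, the layer variable t, and the event t \<le> alpha x/w
  written as t w/alpha \<le> x.\<close>
definition layer_integrand :: "nat \<Rightarrow> real \<Rightarrow> real \<Rightarrow> real \<Rightarrow> real \<Rightarrow> ennreal" where
  "layer_integrand n \<alpha> w x t = ennreal (erlang_density n 1 x) * ennreal (1/(1+t)) * indicator {0<..} t *
     (if t*w/\<alpha> \<le> x then 1 else 0)"

lemma layer_integrand_measurable [measurable]:
  "(\<lambda>(x, t). layer_integrand n \<alpha> w x t) \<in> borel_measurable (lborel \<Otimes>\<^sub>M lborel)"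
  unfolding layer_integrand_def by measurable

lemma layer_integrand_int_t:
  assumes w: "w > 0" and a: "\<alpha> > 0"
  shows "ennreal (erlang_density n 1 x) * ennreal (ln (1 + \<alpha> * x / w)) =
           (\<integral>\<^sup>+t. layer_integrand n \<alpha> w x t \<partial>lborel)"
proof (cases "x < 0")
  case True
  then show ?thesis unfolding layer_integrand_def erlang_density_def by simp
next
  case False
  then have v: "\<alpha> * x / w \<ge> 0" using a w by simp
  have "ennreal (erlang_density n 1 x) * ennreal (ln (1 + \<alpha> * x / w)) =
    (\<integral>\<^sup>+t. ennreal (erlang_density n 1 x) * (ennreal (1 / (1 + t)) * indicator {0..\<alpha> * x / w} t) \<partial>lborel)"
    unfolding ln_as_nn_integral[OF v] by (rule nn_integral_cmult[symmetric]) measurable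
  also have "\<dots> = (\<integral>\<^sup>+t. layer_integrand n \<alpha> w x t \<partial>lborel)"
  proof (rule nn_integral_cong_AE)
    show "AE t in lborel. ennreal (erlang_density n 1 x) * (ennreal (1 / (1 + t)) *
            indicator {0..\<alpha> * x / w} t) = layer_integrand n \<alpha> w x t"
      using AE_lborel_singleton[of 0]
    proof eventually_elim
      case (elim t)
      have "t \<in> {0..\<alpha> * x / w} \<longleftrightarrow> 0 < t \<and> t*w/\<alpha> \<le> x"
        using elim a w by (auto simp: field_simps)
      then show ?case unfolding layer_integrand_def by (auto simp: indicator_def mult_ac)
    qed
  qed
  finally show ?thesis .
qed

lemma layer_integrand_int_x:
  assumes w: "w > 0" and a: "\<alpha> > 0"
  shows "(\<integral>\<^sup>+x. layer_integrand n \<alpha> w x t \<partial>lborel) =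
           ennreal (indicator {0<..} t * (1/(1+t)) * erlang_tail n (t*w/\<alpha>))"
proof (cases "t > 0")
  case False
  then show ?thesis unfolding layer_integrand_def by simp
next
  case True
  have s: "t*w/\<alpha> \<ge> 0" using True w a by simp
  have "(\<integral>\<^sup>+x. layer_integrand n \<alpha> w x t \<partial>lborel) =
      (\<integral>\<^sup>+x. ennreal (1/(1+t)) * (ennreal (erlang_density n 1 x) * indicator {t*w/\<alpha>..} x) \<partial>lborel)"
    unfolding layer_integrand_def using True by (intro nn_integral_cong) (auto simp: indicator_def mult_ac)
  also have "\<dots> = ennreal (1/(1+t)) * ennreal (erlang_tail n (t*w/\<alpha>))"
    unfolding nn_integral_erlang_tail[OF s, symmetric] by (rule nn_integral_cmult) measurable
  also have "\<dots> = ennreal (indicator {0<..} t * (1/(1+t)) * erlang_tail n (t*w/\<alpha>))"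
    using True erlang_tail_nonneg[OF s] by (simp add: ennreal_mult[symmetric])
  finally show ?thesis .
qed

lemma nn_integral_erlang_ln:
  fixes w \<alpha> :: real
  assumes w: "w > 0" and a: "\<alpha> > 0"
  shows "(\<integral>\<^sup>+x. ennreal (erlang_density n 1 x) * ennreal (ln (1 + \<alpha> * x / w)) \<partial>lborel) =
         (\<integral>\<^sup>+t. ennreal (indicator {0<..} t * (1/(1+t)) * erlang_tail n (t*w/\<alpha>)) \<partial>lborel)"
proof -
  have "(\<integral>\<^sup>+x. ennreal (erlang_density n 1 x) * ennreal (ln (1 + \<alpha> * x / w)) \<partial>lborel) =
      (\<integral>\<^sup>+x. \<integral>\<^sup>+t. layer_integrand n \<alpha> w x t \<partial>lborel \<partial>lborel)"
    by (simp add: layer_integrand_int_t[OF w a])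
  also have "\<dots> = (\<integral>\<^sup>+t. \<integral>\<^sup>+x. layer_integrand n \<alpha> w x t \<partial>lborel \<partial>lborel)"
    using lborel_pair.Fubini'[OF layer_integrand_measurable] by simp
  also have "\<dots> = (\<integral>\<^sup>+t. ennreal (indicator {0<..} t * (1/(1+t)) * erlang_tail n (t*w/\<alpha>)) \<partial>lborel)"
    by (simp add: layer_integrand_int_x[OF w a])
  finally show ?thesis .
qed



section \<open>Integrating the Erlang tail against the mixture density\<close>

text \<open>An Erlang density times a Poisson tail is again a combination of Erlang densities.\<close>
definition tail_coeff :: "nat \<Rightarrow> real \<Rightarrow> real \<Rightarrow> nat \<Rightarrow> real" where
  "tail_coeff k l s i = s^i / fact i * l^(k+1) * fact (k+i) / (fact k * (l+s)^(k+i+1))"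

lemma erlang_poisson_product:
  fixes l s w :: real
  assumes ls: "l + s > 0"
  shows "l ^ Suc k * w ^ k * exp (- l * w) / fact k * ((s * w) ^ i * exp (- (s * w)) / fact i) =
      tail_coeff k l s i * ((l + s) ^ Suc (k + i) * w ^ (k + i) * exp (- (l + s) * w) / fact (k + i))"
proof -
  define u where "u = l + s"
  have u: "u > 0" using ls unfolding u_def .
  have ex: "exp (- u * w) = exp (- l * w) * exp (- (s * w))"
    unfolding u_def by (simp add: exp_add[symmetric] algebra_simps)
  show ?thesis unfolding tail_coeff_def u_def[symmetric] ex
    using u by (simp add: field_simps power_add power_mult_distrib)
qed

lemma erlang_times_tail:
  assumes l: "l > 0" and s: "s \<ge> 0"
  shows "erlang_density k l w * erlang_tail n (s*w) =
           (\<Sum>i\<le>n. tail_coeff k l s i * erlang_density (k+i) (l+s) w)"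
proof (cases "w < 0")
  case True
  then show ?thesis unfolding erlang_density_def by simp
next
  case False
  have e1: "erlang_density k l w = l ^ Suc k * w ^ k * exp (- l * w) / fact k"
    using False by (simp add: erlang_density_def)
  have e2: "erlang_density (k+i) (l+s) w =
              (l + s) ^ Suc (k + i) * w ^ (k + i) * exp (- (l + s) * w) / fact (k + i)" for i
    using False by (simp add: erlang_density_def)
  show ?thesis unfolding e1 e2 erlang_tail_def sum_distrib_left
    by (intro sum.cong refl erlang_poisson_product) (use l s in simp)
qed

lemma has_bochner_integral_erlang_times_tail:
  assumes l: "l > 0" and s: "s \<ge> 0"
  shows "has_bochner_integral lborel (\<lambda>w. erlang_density k l w * erlang_tail n (s*w))
           (\<Sum>i\<le>n. tail_coeff k l s i)"
proof -
  have "has_bochner_integral lborel (\<lambda>w. \<Sum>i\<le>n. tail_coeff k l s i * erlang_density (k+i) (l+s) w)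
          (\<Sum>i\<le>n. tail_coeff k l s i * 1)"
    by (intro has_bochner_integral_sum has_bochner_integral_mult_right
          has_bochner_integral_erlang_density) (use l s in auto)
  then show ?thesis by (simp add: erlang_times_tail[OF l s])
qed

text \<open>The value of  \<integral> h(w) Q_n(s w) dw  for the mixture density h.\<close>
definition mixture_tail_integral :: "nat \<Rightarrow> real \<Rightarrow> real \<Rightarrow> nat \<Rightarrow> real \<Rightarrow> real" where
  "mixture_tail_integral L d1 d2 n s = (\<Sum>j\<in>{1::nat, 2}. \<Sum>k = 0..L - 1.
      acoef L (dsel j d1 d2) (dsel j d2 d1) k * (fact k * dsel j d1 d2 ^ (k + 1))
      * (\<Sum>i\<le>n. tail_coeff k (1 / dsel j d1 d2) s i))"

lemma has_bochner_integral_mixture_tail: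
  assumes d1: "d1 > 0" and d2: "d2 > 0" and s: "s \<ge> 0"
  shows "has_bochner_integral lborel (\<lambda>w. mixture_density L d1 d2 w * erlang_tail n (s*w))
           (mixture_tail_integral L d1 d2 n s)"
proof -
  have pos: "1 / dsel j d1 d2 > 0" for j using d1 d2 by (simp add: dsel_def)
  have "has_bochner_integral lborel (\<lambda>w. \<Sum>j\<in>{1::nat, 2}. \<Sum>k = 0..L - 1.
      acoef L (dsel j d1 d2) (dsel j d2 d1) k * (fact k * dsel j d1 d2 ^ (k + 1))
      * (erlang_density k (1 / dsel j d1 d2) w * erlang_tail n (s*w))) (mixture_tail_integral L d1 d2 n s)"
    unfolding mixture_tail_integral_def
    by (intro has_bochner_integral_sum has_bochner_integral_mult_right
          has_bochner_integral_erlang_times_tail pos s)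
  then show ?thesis
    unfolding mixture_density_def sum_distrib_right by (simp add: mult.assoc)
qed

lemma mixture_tail_integrand_nonneg_AE:
  assumes h_nonneg: "\<And>w. w > 0 \<Longrightarrow> mixture_density L d1 d2 w \<ge> 0" and s: "s \<ge> 0"
  shows "AE w in lborel. 0 \<le> mixture_density L d1 d2 w * erlang_tail n (s*w)"
  using AE_lborel_singleton[of 0]
proof eventually_elim
  case (elim w)
  then consider "w > 0" | "w < 0" by linarith
  then show ?case
    by cases (use h_nonneg erlang_tail_nonneg[of "s*w" n] s mixture_density_neg in auto)
qed

lemma mixture_tail_integral_nonneg:
  assumes d1: "d1 > 0" and d2: "d2 > 0" and s: "s \<ge> 0"
    and h_nonneg: "\<And>w. w > 0 \<Longrightarrow> mixture_density L d1 d2 w \<ge> 0"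
  shows "mixture_tail_integral L d1 d2 n s \<ge> 0"
proof -
  have "mixture_tail_integral L d1 d2 n s = (\<integral>w. mixture_density L d1 d2 w * erlang_tail n (s*w) \<partial>lborel)"
    using has_bochner_integral_mixture_tail[OF d1 d2 s, where L=L and n=n] by (simp add: has_bochner_integral_integral_eq)
  also have "\<dots> \<ge> 0"
    by (rule integral_nonneg_AE[OF mixture_tail_integrand_nonneg_AE[OF h_nonneg s]])
  finally show ?thesis .
qed


section \<open>The integrals I2\<close>

lemma integrable_inverse_square: "integrable lborel (\<lambda>t::real. indicator {0..} t * (1 / (t+1)^2))"
proof (rule integrableI_nonneg)
  have "(\<integral>\<^sup>+t. ennreal (1 / (t+1)^2) * indicator {0..} t \<partial>lborel) = ennreal (0 - (- 1 / (0 + 1)))"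
  proof (rule nn_integral_FTC_atLeast[where F="\<lambda>t. - 1 / (t + 1)"])
    show "((\<lambda>t::real. - 1 / (t + 1)) \<longlongrightarrow> 0) at_top" by real_asymp
  qed (auto intro!: derivative_eq_intros simp: power2_eq_square)
  moreover have "(\<integral>\<^sup>+t. ennreal (indicator {0..} t * (1 / (t+1)^2)) \<partial>lborel) =
      (\<integral>\<^sup>+t. ennreal (1 / (t+1)^2) * indicator {0..} t \<partial>lborel)"
    by (intro nn_integral_cong) (auto split: split_indicator)
  ultimately show "(\<integral>\<^sup>+t. ennreal (indicator {0..} t * (1 / (t+1)^2)) \<partial>lborel) < \<infinity>"
    by simp
qed (auto split: split_indicator)

lemma I2_integrand_bound:
  fixes t \<beta> :: real
  assumes t: "t > 0" and b: "\<beta> > 0" and iK: "i < K"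
  shows "t^i / ((t+\<beta>)^K * (t+1)) \<le> ((1 + 1/\<beta>) / \<beta>^(K-i-1)) * (1 / (t+1)^2)"
proof -
  have tb: "t + \<beta> > 0" using t b by simp
  have "t^i / ((t+\<beta>)^K * (t+1)) \<le> (t+\<beta>)^i / ((t+\<beta>)^K * (t+1))"
    using t b tb by (intro divide_right_mono power_mono) auto
  also have "K = i + ((K-i-1) + 1)" using iK by simp
  then have "(t+\<beta>)^K = (t+\<beta>)^i * ((t+\<beta>)^(K-i-1) * (t+\<beta>))"
    by (metis power_add power_one_right)
  then have "(t+\<beta>)^i / ((t+\<beta>)^K * (t+1)) = 1 / ((t+\<beta>)^(K-i-1) * ((t+\<beta>) * (t+1)))"
    using tb by (simp add: mult_ac)
  also have "\<dots> \<le> 1 / (\<beta>^(K-i-1) * ((t+1)^2 / (1 + 1/\<beta>)))"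
  proof (rule divide_left_mono)
    have "(t+1)^2 / (1 + 1/\<beta>) \<le> (t+\<beta>) * (t+1)"
      using t b by (simp add: field_simps power2_eq_square)
    then show "\<beta>^(K-i-1) * ((t+1)^2 / (1 + 1/\<beta>)) \<le> (t+\<beta>)^(K-i-1) * ((t+\<beta>) * (t+1))"
      using t b tb by (intro mult_mono power_mono) auto
    show "0 < (t+\<beta>)^(K-i-1) * ((t+\<beta>) * (t+1)) * (\<beta>^(K-i-1) * ((t+1)^2 / (1 + 1/\<beta>)))"
      using t b tb by (intro mult_pos_pos) (auto simp: add_pos_pos)
  qed simp
  also have "\<dots> = ((1 + 1/\<beta>) / \<beta>^(K-i-1)) * (1 / (t+1)^2)"
    using t b by (simp add: field_simps)
  finally show ?thesis .
qed

lemma has_bochner_integral_I2: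
  fixes \<beta> :: real
  assumes b: "\<beta> > 0" and iK: "i < K"
  shows "has_bochner_integral lborel (\<lambda>t. indicator {0<..} t * (t^i / ((t+\<beta>)^K * (t+1)))) (I2 \<beta> i K)"
proof -
  have "integrable lborel (\<lambda>t. indicator {0<..} t * (t^i / ((t+\<beta>)^K * (t+1))))"
  proof (rule Bochner_Integration.integrable_bound)
    show "integrable lborel (\<lambda>t. ((1 + 1/\<beta>) / \<beta>^(K-i-1)) * (indicator {0..} t * (1 / (t+1)^2)))"
      by (intro integrable_mult_right integrable_inverse_square)
    have "0 \<le> t^i / ((t+\<beta>)^K * (t+1))" if "t > 0" for t
      using that b by simp
    then show "AE t in lborel. norm (indicator {0<..} t * (t^i / ((t+\<beta>)^K * (t+1)))) \<le>
          norm (((1 + 1/\<beta>) / \<beta>^(K-i-1)) * (indicator {0..} t * (1 / (t+1)^2)))"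
      using I2_integrand_bound[OF _ b iK] b by (intro AE_I2) (auto simp: indicator_def)
  qed measurable
  then show ?thesis
    unfolding I2_def set_lebesgue_integral_def by (simp add: has_bochner_integral_integrable)
qed


section \<open>The expectation for an independent pair (z, W)\<close>

text \<open>The right-hand side of the theorem, with n = N - L - 1.\<close>
definition rate_formula :: "nat \<Rightarrow> real \<Rightarrow> real \<Rightarrow> nat \<Rightarrow> real \<Rightarrow> real" where
  "rate_formula L d1 d2 n \<alpha> = (\<Sum>i = 0..n. \<Sum>j\<in>{1::nat, 2}. \<Sum>k = 0..L - 1.
         acoef L (dsel j d1 d2) (dsel j d2 d1) k * \<alpha> ^ (k + 1) * fact (k + i) / fact i
         * I2 (\<alpha> / dsel j d1 d2) i (k + i + 1))"

text \<open>Rescaling the tail coefficients at s = t/alpha, which turns 1/(1/d + s)^(k+i+1) into the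
  factor 1/(t + alpha/d)^(k+i+1) of the I2 integrand.\<close>
lemma tail_coeff_scaled:
  assumes d: "d > 0" and a: "\<alpha> > 0" and t: "t > 0"
  shows "(fact k * d^(k+1)) * tail_coeff k (1/d) (t/\<alpha>) i =
           \<alpha>^(k+1) * fact (k+i) / fact i * (t^i / (t + \<alpha>/d)^(k+i+1))"
proof -
  define u where "u = t + \<alpha>/d"
  have u: "u > 0" using d a t unfolding u_def by (auto intro!: add_pos_pos divide_pos_pos)
  have e: "1/d + t/\<alpha> = u / \<alpha>" using a d unfolding u_def by (simp add: field_simps)
  have e2: "\<alpha>^(k+i+1) = \<alpha>^i * \<alpha>^(k+1)"
    by (simp add: power_add[symmetric] add.commute add.left_commute)
  show ?thesis unfolding tail_coeff_def e u_def[symmetric] power_divide e2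
    using u a d by (simp add: field_simps power_add)
qed

lemma sum_rotate3: "(\<Sum>j\<in>J. \<Sum>k\<in>K. \<Sum>i\<in>I. F i j k) = (\<Sum>i\<in>I. \<Sum>j\<in>J. \<Sum>k\<in>K. F i j k)"
proof -
  have "(\<Sum>j\<in>J. \<Sum>k\<in>K. \<Sum>i\<in>I. F i j k) = (\<Sum>j\<in>J. \<Sum>i\<in>I. \<Sum>k\<in>K. F i j k)"
    by (rule sum.cong[OF refl], rule sum.swap)
  also have "\<dots> = (\<Sum>i\<in>I. \<Sum>j\<in>J. \<Sum>k\<in>K. F i j k)" by (rule sum.swap)
  finally show ?thesis .
qed

lemma rate_integrand_expand:
  assumes d1: "d1 > 0" and d2: "d2 > 0" and a: "\<alpha> > 0"
  shows "indicator {0<..} t * (1/(1+t)) * mixture_tail_integral L d1 d2 n (t/\<alpha>) =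
    (\<Sum>i = 0..n. \<Sum>j\<in>{1::nat, 2}. \<Sum>k = 0..L - 1.
         (acoef L (dsel j d1 d2) (dsel j d2 d1) k * \<alpha> ^ (k + 1) * fact (k + i) / fact i)
         * (indicator {0<..} t * (t^i / ((t + \<alpha> / dsel j d1 d2)^(k+i+1) * (t+1)))))"
proof (cases "t > 0")
  case False
  then show ?thesis by simp
next
  case True
  have dp: "dsel j d1 d2 > 0" for j using d1 d2 by (simp add: dsel_def)
  have "indicator {0<..} t * (1/(1+t)) * mixture_tail_integral L d1 d2 n (t/\<alpha>) =
    (\<Sum>j\<in>{1::nat, 2}. \<Sum>k = 0..L - 1. \<Sum>i = 0..n.
         (acoef L (dsel j d1 d2) (dsel j d2 d1) k * \<alpha> ^ (k + 1) * fact (k + i) / fact i)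
         * (indicator {0<..} t * (t^i / ((t + \<alpha> / dsel j d1 d2)^(k+i+1) * (t+1)))))"
    unfolding mixture_tail_integral_def sum_distrib_left atLeast0AtMost[symmetric]
  proof (intro sum.cong refl)
    fix j k i
    have "t + \<alpha> / dsel j d1 d2 > 0" using True a dp[of j] by (auto intro!: add_pos_pos divide_pos_pos)
    then have pos: "(t + \<alpha> / dsel j d1 d2)^(k+i+1) > 0" by (rule zero_less_power)
    show "indicator {0<..} t * (1/(1+t)) * (acoef L (dsel j d1 d2) (dsel j d2 d1) k
        * (fact k * dsel j d1 d2 ^ (k + 1)) * tail_coeff k (1 / dsel j d1 d2) (t / \<alpha>) i) =
      (acoef L (dsel j d1 d2) (dsel j d2 d1) k * \<alpha> ^ (k + 1) * fact (k + i) / fact i)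
         * (indicator {0<..} t * (t^i / ((t + \<alpha> / dsel j d1 d2)^(k+i+1) * (t+1))))"
      using True pos unfolding mult.assoc[of "acoef _ _ _ _"] tail_coeff_scaled[OF dp a True]
      by (simp add: field_simps)
  qed
  also have "\<dots> = (\<Sum>i = 0..n. \<Sum>j\<in>{1::nat, 2}. \<Sum>k = 0..L - 1.
         (acoef L (dsel j d1 d2) (dsel j d2 d1) k * \<alpha> ^ (k + 1) * fact (k + i) / fact i)
         * (indicator {0<..} t * (t^i / ((t + \<alpha> / dsel j d1 d2)^(k+i+1) * (t+1)))))"
    by (rule sum_rotate3)
  finally show ?thesis .
qed

lemma has_bochner_integral_rate:
  assumes d1: "d1 > 0" and d2: "d2 > 0" and a: "\<alpha> > 0"
  shows "has_bochner_integral lborel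
           (\<lambda>t. indicator {0<..} t * (1/(1+t)) * mixture_tail_integral L d1 d2 n (t/\<alpha>))
           (rate_formula L d1 d2 n \<alpha>)"
proof -
  have "\<alpha> / dsel j d1 d2 > 0" for j using d1 d2 a by (simp add: dsel_def)
  then show ?thesis
    unfolding rate_integrand_expand[OF d1 d2 a] rate_formula_def
    by (intro has_bochner_integral_sum has_bochner_integral_mult_right has_bochner_integral_I2) simp_all
qed


lemma mixture_ln_integral_in_x:
  assumes a: "\<alpha> > 0" and h_nonneg: "\<And>w. w > 0 \<Longrightarrow> mixture_density L d1 d2 w \<ge> 0"
  shows "AE w in lborel.
    (\<integral>\<^sup>+x. ennreal (erlang_density n 1 x) * ennreal (mixture_density L d1 d2 w)
            * ennreal (ln (1 + \<alpha> * x / w)) \<partial>lborel) =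
    (\<integral>\<^sup>+t. ennreal (mixture_density L d1 d2 w *
            (indicator {0<..} t * (1/(1+t)) * erlang_tail n (t*w/\<alpha>))) \<partial>lborel)"
  using AE_lborel_singleton[of 0]
proof eventually_elim
  case (elim w)
  let ?h = "mixture_density L d1 d2 w"
  show ?case
  proof (cases "w > 0")
    case False
    then show ?thesis using elim by (simp add: mixture_density_neg)
  next
    case True
    have "(\<integral>\<^sup>+x. ennreal (erlang_density n 1 x) * ennreal ?h * ennreal (ln (1 + \<alpha> * x / w)) \<partial>lborel)
        = ennreal ?h * (\<integral>\<^sup>+x. ennreal (erlang_density n 1 x) * ennreal (ln (1 + \<alpha> * x / w)) \<partial>lborel)"
      by (subst nn_integral_cmult[symmetric]) (auto simp: mult_ac)
    also have "\<dots> = ennreal ?h *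
        (\<integral>\<^sup>+t. ennreal (indicator {0<..} t * (1/(1+t)) * erlang_tail n (t*w/\<alpha>)) \<partial>lborel)"
      by (simp add: nn_integral_erlang_ln[OF True a])
    also have "\<dots> = (\<integral>\<^sup>+t. ennreal ?h *
        ennreal (indicator {0<..} t * (1/(1+t)) * erlang_tail n (t*w/\<alpha>)) \<partial>lborel)"
      by (rule nn_integral_cmult[symmetric]) measurable
    also have "\<dots> = (\<integral>\<^sup>+t. ennreal (?h * (indicator {0<..} t * (1/(1+t)) * erlang_tail n (t*w/\<alpha>))) \<partial>lborel)"
      by (intro nn_integral_cong) (rule ennreal_mult'[symmetric, OF h_nonneg[OF True]])
    finally show ?thesis .
  qed
qed

lemma mixture_ln_integral_in_w:
  assumes d1: "d1 > 0" and d2: "d2 > 0" and a: "\<alpha> > 0"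
    and h_nonneg: "\<And>w. w > 0 \<Longrightarrow> mixture_density L d1 d2 w \<ge> 0"
  shows "(\<integral>\<^sup>+w. ennreal (mixture_density L d1 d2 w *
            (indicator {0<..} t * (1/(1+t)) * erlang_tail n (t*w/\<alpha>))) \<partial>lborel) =
         ennreal (indicator {0<..} t * (1/(1+t)) * mixture_tail_integral L d1 d2 n (t/\<alpha>))"
proof (cases "t > 0")
  case False
  then show ?thesis by simp
next
  case True
  let ?g = "\<lambda>w. (1/(1+t)) * (mixture_density L d1 d2 w * erlang_tail n ((t/\<alpha>)*w))"
  have s: "t/\<alpha> \<ge> 0" using True a by simp
  have int: "has_bochner_integral lborel ?g ((1/(1+t)) * mixture_tail_integral L d1 d2 n (t/\<alpha>))"
    by (intro has_bochner_integral_mult_right has_bochner_integral_mixture_tail[OF d1 d2 s])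
  have "(\<integral>\<^sup>+w. ennreal (mixture_density L d1 d2 w *
            (indicator {0<..} t * (1/(1+t)) * erlang_tail n (t*w/\<alpha>))) \<partial>lborel) =
        (\<integral>\<^sup>+w. ennreal (?g w) \<partial>lborel)"
    using True by (simp add: mult_ac)
  also have "\<dots> = ennreal (\<integral>w. ?g w \<partial>lborel)"
  proof (rule nn_integral_eq_integral)
    show "integrable lborel ?g" using int by (rule integrable.intros)
    show "AE w in lborel. 0 \<le> ?g w"
      by (rule eventually_mono[OF mixture_tail_integrand_nonneg_AE[OF h_nonneg s, of n]])
         (use True in \<open>auto intro!: mult_nonneg_nonneg\<close>)
  qed
  also have "\<dots> = ennreal (indicator {0<..} t * (1/(1+t)) * mixture_tail_integral L d1 d2 n (t/\<alpha>))"
    unfolding has_bochner_integral_integral_eq[OF int] using True by simp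
  finally show ?thesis .
qed

lemma mixture_ln_integral:
  fixes d1 d2 \<alpha> :: real
  assumes d1: "d1 > 0" and d2: "d2 > 0" and a: "\<alpha> > 0"
    and h_nonneg: "\<And>w. w > 0 \<Longrightarrow> mixture_density L d1 d2 w \<ge> 0"
  shows "(\<integral>\<^sup>+w. \<integral>\<^sup>+x. ennreal (erlang_density n 1 x) * ennreal (mixture_density L d1 d2 w)
            * ennreal (ln (1 + \<alpha> * x / w)) \<partial>lborel \<partial>lborel) = ennreal (rate_formula L d1 d2 n \<alpha>)"
    and "rate_formula L d1 d2 n \<alpha> \<ge> 0"
proof -
  define \<phi> where "\<phi> t = indicator {0<..} t * (1/(1+t)) * mixture_tail_integral L d1 d2 n (t/\<alpha>)" for t
  have \<phi>_nonneg: "0 \<le> \<phi> t" for t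
    using mixture_tail_integral_nonneg[OF d1 d2 _ h_nonneg, of "t/\<alpha>" n] a
    unfolding \<phi>_def by (cases "t > 0") auto
  have \<phi>_int: "has_bochner_integral lborel \<phi> (rate_formula L d1 d2 n \<alpha>)"
    unfolding \<phi>_def by (rule has_bochner_integral_rate[OF d1 d2 a])
  have "(\<integral>\<^sup>+w. \<integral>\<^sup>+x. ennreal (erlang_density n 1 x) * ennreal (mixture_density L d1 d2 w)
            * ennreal (ln (1 + \<alpha> * x / w)) \<partial>lborel \<partial>lborel) =
        (\<integral>\<^sup>+w. \<integral>\<^sup>+t. ennreal (mixture_density L d1 d2 w *
            (indicator {0<..} t * (1/(1+t)) * erlang_tail n (t*w/\<alpha>))) \<partial>lborel \<partial>lborel)"
    by (rule nn_integral_cong_AE[OF mixture_ln_integral_in_x[OF a h_nonneg]])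
  also have "\<dots> = (\<integral>\<^sup>+t. \<integral>\<^sup>+w. ennreal (mixture_density L d1 d2 w *
            (indicator {0<..} t * (1/(1+t)) * erlang_tail n (t*w/\<alpha>))) \<partial>lborel \<partial>lborel)"
    by (rule lborel_pair.Fubini'[symmetric]) measurable
  also have "\<dots> = (\<integral>\<^sup>+t. ennreal (\<phi> t) \<partial>lborel)"
    by (rule nn_integral_cong) (unfold \<phi>_def, rule mixture_ln_integral_in_w[OF d1 d2 a h_nonneg])
  also have "\<dots> = ennreal (rate_formula L d1 d2 n \<alpha>)"
    using \<phi>_int \<phi>_nonneg
    by (simp add: nn_integral_eq_integral integrable.intros has_bochner_integral_integral_eq)
  finally show "(\<integral>\<^sup>+w. \<integral>\<^sup>+x. ennreal (erlang_density n 1 x) * ennreal (mixture_density L d1 d2 w)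
            * ennreal (ln (1 + \<alpha> * x / w)) \<partial>lborel \<partial>lborel) = ennreal (rate_formula L d1 d2 n \<alpha>)" .
  show "rate_formula L d1 d2 n \<alpha> \<ge> 0"
    using \<phi>_int Bochner_Integration.integral_nonneg[of lborel \<phi>] \<phi>_nonneg
    by (simp add: has_bochner_integral_integral_eq)
qed


lemma (in prob_space) expectation_ln_ratio:
  fixes z W :: "'a \<Rightarrow> real"
  assumes Dz: "distributed M lborel z (erlang_density n 1)"
    and DW: "distributed M lborel W (mixture_density L d1 d2)"
    and indep: "indep_var borel z borel W"
    and d1: "d1 > 0" and d2: "d2 > 0" and a: "\<alpha> > 0"
    and h_nonneg: "\<And>w. w > 0 \<Longrightarrow> mixture_density L d1 d2 w \<ge> 0"
  shows "integrable M (\<lambda>\<omega>. ln (1 + \<alpha> * z \<omega> / W \<omega>))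
    \<and> (\<integral>\<omega>. ln (1 + \<alpha> * z \<omega> / W \<omega>) \<partial>M) = rate_formula L d1 d2 n \<alpha>"
proof -
  have [measurable]: "z \<in> borel_measurable M" "W \<in> borel_measurable M"
    using distributed_measurable[OF Dz] distributed_measurable[OF DW] by simp_all
  have indep_lborel: "indep_var lborel z lborel W"
    using indep unfolding indep_var_def
    by (simp add: indep_vars_def2 case_bool_if if_distrib cong: if_cong)
  have joint: "distributed M (lborel \<Otimes>\<^sub>M lborel) (\<lambda>\<omega>. (z \<omega>, W \<omega>))
      (\<lambda>(x, w). ennreal (erlang_density n 1 x) * ennreal (mixture_density L d1 d2 w))"
    by (rule distributed_joint_indep[OF sigma_finite_lborel sigma_finite_lborel Dz DW indep_lborel])
  have nn_int: "(\<integral>\<^sup>+\<omega>. ennreal (ln (1 + \<alpha> * z \<omega> / W \<omega>)) \<partial>M) = ennreal (rate_formula L d1 d2 n \<alpha>)"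
  proof -
    have "(\<integral>\<^sup>+\<omega>. ennreal (ln (1 + \<alpha> * z \<omega> / W \<omega>)) \<partial>M) =
        (\<integral>\<^sup>+p. (\<lambda>(x, w). ennreal (erlang_density n 1 x) * ennreal (mixture_density L d1 d2 w)) p
               * ennreal (ln (1 + \<alpha> * fst p / snd p)) \<partial>(lborel \<Otimes>\<^sub>M lborel))"
      using distributed_nn_integral[OF joint, of "\<lambda>p. ennreal (ln (1 + \<alpha> * fst p / snd p))"] by simp
    also have "\<dots> = (\<integral>\<^sup>+w. \<integral>\<^sup>+x. ennreal (erlang_density n 1 x) * ennreal (mixture_density L d1 d2 w)
                      * ennreal (ln (1 + \<alpha> * x / w)) \<partial>lborel \<partial>lborel)"
      by (subst lborel_pair.nn_integral_snd[symmetric]) auto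
    also have "\<dots> = ennreal (rate_formula L d1 d2 n \<alpha>)"
      by (rule mixture_ln_integral(1)[OF d1 d2 a h_nonneg])
    finally show ?thesis .
  qed
  have "AE \<omega> in M. 0 \<le> z \<omega>"
    by (subst distributed_AE2[OF Dz]) (auto simp: erlang_density_def intro!: AE_I2)
  moreover have "AE \<omega> in M. 0 \<le> W \<omega>"
  proof -
    have "0 \<le> w" if "0 < mixture_density L d1 d2 w" for w
      using that mixture_density_neg[of w] by force
    then show ?thesis by (subst distributed_AE2[OF DW]) (auto intro!: AE_I2)
  qed
  ultimately have nonneg: "AE \<omega> in M. 0 \<le> ln (1 + \<alpha> * z \<omega> / W \<omega>)"
    by eventually_elim (use a in simp)
  have "integrable M (\<lambda>\<omega>. ln (1 + \<alpha> * z \<omega> / W \<omega>))"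
    by (rule integrableI_nonneg) (use nonneg nn_int in auto)
  moreover have "(\<integral>\<omega>. ln (1 + \<alpha> * z \<omega> / W \<omega>) \<partial>M) = rate_formula L d1 d2 n \<alpha>"
    using nonneg nn_int mixture_ln_integral(2)[OF d1 d2 a h_nonneg]
    by (subst integral_eq_nn_integral) auto
  ultimately show ?thesis by blast
qed


section \<open>The probabilistic assembly\<close>

lemma (in prob_space) indep_weighted_components:
  fixes z y1 y2 :: "'a \<Rightarrow> real"
  assumes indep: "indep_vars (\<lambda>_. borel)
                    (\<lambda>i. if i = (0::nat) then z else if i = 1 then y1 else y2) {0, 1, 2}"
  shows "indep_var borel z borel (\<lambda>\<omega>. d1 * y1 \<omega> + d2 * y2 \<omega>)"
    and "indep_var borel (\<lambda>\<omega>. d1 * y1 \<omega>) borel (\<lambda>\<omega>. d2 * y2 \<omega>)"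
proof -
  define X where "X i = (if i = (0::nat) then z else if i = 1 then (\<lambda>\<omega>. d1 * y1 \<omega>) else (\<lambda>\<omega>. d2 * y2 \<omega>))"
    for i
  have "indep_vars (\<lambda>_. borel) (\<lambda>i \<omega>. (if i = (0::nat) then id else if i = 1 then (*) d1 else (*) d2)
          ((\<lambda>i. if i = (0::nat) then z else if i = 1 then y1 else y2) i \<omega>)) {0, 1, 2}"
    by (rule indep_vars_compose2[OF indep]) auto
  then have indep_X: "indep_vars (\<lambda>_. borel) X {0, 1, 2}"
    by (rule indep_vars_cong[THEN iffD1, rotated -1]) (auto simp: X_def fun_eq_iff)
  show "indep_var borel z borel (\<lambda>\<omega>. d1 * y1 \<omega> + d2 * y2 \<omega>)"
    using indep_vars_sum[of "{1, 2}" 0 X] indep_X by (simp add: X_def)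
  show "indep_var borel (\<lambda>\<omega>. d1 * y1 \<omega>) borel (\<lambda>\<omega>. d2 * y2 \<omega>)"
    using indep_vars_sum[of "{2}" 1 X] indep_vars_subset[OF indep_X, of "{1, 2}"] by (simp add: X_def)
qed

lemma (in prob_space) distributed_weighted_erlang_sum:
  fixes y1 y2 :: "'a \<Rightarrow> real"
  assumes indep: "indep_var borel (\<lambda>\<omega>. d1 * y1 \<omega>) borel (\<lambda>\<omega>. d2 * y2 \<omega>)"
    and D1: "distributed M lborel y1 (erlang_density m 1)"
    and D2: "distributed M lborel y2 (erlang_density m 1)"
    and d1: "d1 > 0" and d2: "d2 > 0" and d12: "d1 \<noteq> d2"
  shows "distributed M lborel (\<lambda>\<omega>. d1 * y1 \<omega> + d2 * y2 \<omega>) (mixture_density (Suc m) d1 d2)"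
proof -
  have conv: "distributed M lborel (\<lambda>\<omega>. d1 * y1 \<omega> + d2 * y2 \<omega>)
      (\<lambda>x. \<integral>\<^sup>+y. ennreal (erlang_density m (1/d1) (x - y)) * ennreal (erlang_density m (1/d2) y) \<partial>lborel)"
    using distributed_convolution[OF indep erlang_distributed_mult_const[OF D1 d1]
        erlang_distributed_mult_const[OF D2 d2]] by simp
  have "AE x in lborel. (\<integral>\<^sup>+y. ennreal (erlang_density m (1/d1) (x - y)) *
          ennreal (erlang_density m (1/d2) y) \<partial>lborel) = ennreal (mixture_density (Suc m) d1 d2 x)"
    using AE_lborel_singleton[of 0]
  proof eventually_elim
    case (elim x)
    show ?case
    proof (cases "x > 0")
      case True
      then show ?thesis by (rule erlang_convolution(1)[OF d1 d2 d12])
    next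
      case False
      then have "x < 0" using elim by simp
      then have zero: "ennreal (erlang_density m (1/d1) (x - y)) * ennreal (erlang_density m (1/d2) y) = 0"
        for y by (cases "y < 0") (auto simp: erlang_density_def)
      show ?thesis unfolding zero mixture_density_neg[OF \<open>x < 0\<close>] by simp
    qed
  qed
  then show ?thesis
    using conv distributed_borel_measurable[OF conv] by (subst (asm) distributed_cong_density) auto
qed

theorem mainTheorem2:
  fixes M :: "'a measure" and z y1 y2 :: "'a \<Rightarrow> real"
    and N L :: nat and \<alpha> \<delta>1 \<delta>2 :: real
  assumes "prob_space M"
    and "1 \<le> L" and "L \<le> N - 1"
    and "\<alpha> > 0" and "\<delta>1 > 0" and "\<delta>2 > 0" and "\<delta>1 \<noteq> \<delta>2"
    and "prob_space.indep_vars M (\<lambda>_. borel)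
           (\<lambda>i. if i = (0::nat) then z else if i = 1 then y1 else y2) {0, 1, 2}"
    and "distributed M lborel z (erlang_density (N - L - 1) 1)"
    and "distributed M lborel y1 (erlang_density (L - 1) 1)"
    and "distributed M lborel y2 (erlang_density (L - 1) 1)"
  shows "integrable M (\<lambda>\<omega>. ln (1 + \<alpha> * z \<omega> / (\<delta>1 * y1 \<omega> + \<delta>2 * y2 \<omega>)))
    \<and> (\<integral>\<omega>. ln (1 + \<alpha> * z \<omega> / (\<delta>1 * y1 \<omega> + \<delta>2 * y2 \<omega>)) \<partial>M) =
      (\<Sum>i = 0..N - L - 1. \<Sum>j\<in>{1, 2}. \<Sum>k = 0..L - 1.
         acoef L (dsel j \<delta>1 \<delta>2) (dsel j \<delta>2 \<delta>1) k * \<alpha> ^ (k + 1) * fact (k + i) / fact i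
         * I2 (\<alpha> / dsel j \<delta>1 \<delta>2) i (k + i + 1))"
proof -
  interpret prob_space M by fact
  obtain m where L: "L = Suc m" using \<open>1 \<le> L\<close> by (cases L) auto
  note weights = \<open>\<delta>1 > 0\<close> \<open>\<delta>2 > 0\<close> \<open>\<delta>1 \<noteq> \<delta>2\<close>
  have W_density: "distributed M lborel (\<lambda>\<omega>. \<delta>1 * y1 \<omega> + \<delta>2 * y2 \<omega>) (mixture_density L \<delta>1 \<delta>2)"
    using distributed_weighted_erlang_sum[OF indep_weighted_components(2)[OF assms(8)]] assms(10,11)
      weights unfolding L by simp
  have h_nonneg: "mixture_density L \<delta>1 \<delta>2 w \<ge> 0" if "w > 0" for w
    unfolding L using erlang_convolution(2)[OF weights that] .
  show ?thesis
    using expectation_ln_ratio[OF assms(9) W_density indep_weighted_components(1)[OF assms(8)]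
        \<open>\<delta>1 > 0\<close> \<open>\<delta>2 > 0\<close> \<open>\<alpha> > 0\<close> h_nonneg]
    unfolding rate_formula_def .
qed

end
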